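(* Let $X_\lambda$ be a cellular multipointed $d$-space and let $\gamma_1,\gamma_2$ be execution paths of $X_\lambda$ such that there exist two nondecreasing set maps $\phi_1,\phi_2:[0,1]\to[0,1]$ (not assumed continuous) with $\phi_i(0)=0$, $\phi_i(1)=1$, and $\gamma_1(\phi_1(t))=\gamma_2(t)$, $\gamma_1(t)=\gamma_2(\phi_2(t))$ for all $t\in[0,1]$. Then $\phi_1,\phi_2\in\mathcal{G}(1,1)$ and $\phi_2=\phi_1^{-1}$.
   Context: Work in $\mathbf{Top}$, the category of $\Delta$-generated spaces (or $\Delta$-Hausdorff $\Delta$-generated spaces). $\mathcal{G}(1,1)$: the nondecreasing homeomorphisms of $[0,1]$; $*_N$: normalized composition of paths on $[0,1]$ (first path on $[0,1/2]$, second on $[1/2,1]$, double speed). A multipointed $d$-space $X=(|X|,X^0,\mathbb{P}^{\mathcal{G}}X)$: a space, a subset of states, a set of continuous execution paths $[0,1]\to|X|$ with endpoints in $X^0$, stable under precomposition by $\mathcal{G}(1,1)$ and $*_N$. Colimits: underlying spaces and states by colimits, execution paths generated by images under $*_N$ and reparametrization. ${\rm Glob}^{\mathcal{G}}(Z)$: quotient of $\{0,1\}\sqcup Z\times[0,1]$ with $(z,0)\sim0$, $(z,1)\sim1$, states $\{0,1\}$, paths $t\mapsto(z,\phi(t))$, $\phi\in\mathcal{G}(1,1)$. Cellular: $X_\lambda=\varinjlim_{\nu<\lambda}X_\nu$ for an ordinal $\lambda$ and colimit-preserving $\nu\mapsto X_\nu$ with $X_0=(X^0,X^0,\varnothing)$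 a set and each $X_\nu\to X_{\nu+1}$ a pushout of some ${\rm Glob}^{\mathcal{G}}(\mathbf{S}^{n_\nu-1})\subset{\rm Glob}^{\mathcal{G}}(\mathbf{D}^{n_\nu})$. *)

theory Defs
  imports "HOL-Analysis.Analysis"
begin

text \<open>Reparametrizations G(1,1): nondecreasing homeomorphisms of [0,1]
  (functions real to real; only their values on [0,1] matter).\<close>
definition G11 :: "(real \<Rightarrow> real) set" where
  "G11 = {\<phi>. mono_on {0..1} \<phi> \<and> (\<exists>\<psi>. homeomorphism {0..1} {0..1} \<phi> \<psi>)}"

definition normcomp :: "(real \<Rightarrow> 'a) \<Rightarrow> (real \<Rightarrow> 'a) \<Rightarrow> real \<Rightarrow> 'a" where
  "normcomp g1 g2 = (\<lambda>t. if t \<le> 1/2 then g1 (2*t) else g2 (2*t - 1))"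

text \<open>Set of execution paths generated by P: smallest set containing P, stable under
  reparametrization by G(1,1) and normalized composition (paths are identified
  when they agree on [0,1]).\<close>
inductive_set gen_paths :: "(real \<Rightarrow> 'a) set \<Rightarrow> (real \<Rightarrow> 'a) set" for P where
  base: "g \<in> P \<Longrightarrow> g \<in> gen_paths P"
| reparam: "g \<in> gen_paths P \<Longrightarrow> \<phi> \<in> G11 \<Longrightarrow> g \<circ> \<phi> \<in> gen_paths P"
| concat: "g1 \<in> gen_paths P \<Longrightarrow> g2 \<in> gen_paths P \<Longrightarrow> g1 1 = g2 0
            \<Longrightarrow> normcomp g1 g2 \<in> gen_paths P"
| ext: "g \<in> gen_paths P \<Longrightarrow> (\<forall>t\<in>{0..1}. h t = g t) \<Longrightarrow> h \<in> gen_paths P"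

record 'a mdspace =
  space :: "'a topology"
  states :: "'a set"
  paths :: "(real \<Rightarrow> 'a) set"

definition md_morphism :: "'a mdspace \<Rightarrow> 'b mdspace \<Rightarrow> ('a \<Rightarrow> 'b) \<Rightarrow> bool" where
  "md_morphism X Y f \<longleftrightarrow> continuous_map (space X) (space Y) f \<and> f ` states X \<subseteq> states Y
     \<and> (\<forall>g\<in>paths X. f \<circ> g \<in> paths Y)"

text \<open>Disk D^n and sphere S^{n-1}, as finitely supported vectors nat => real
  (with the product topology, which on these sets is the Euclidean one).\<close>
definition disk :: "nat \<Rightarrow> (nat \<Rightarrow> real) set" where
  "disk n = {x. (\<forall>i\<ge>n. x i = 0) \<and> (\<Sum>i<n. (x i)^2) \<le> 1}"
definition sphere_m1 :: "nat \<Rightarrow> (nat \<Rightarrow> real) set" where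
  "sphere_m1 n = {x. (\<forall>i\<ge>n. x i = 0) \<and> (\<Sum>i<n. (x i)^2) = 1}"

text \<open>Points of Glob(Z): the two states and interior points (z,t), 0<t<1.\<close>
datatype gpt = Gbot | Gtop | Gin "nat \<Rightarrow> real" real

definition gq :: "(nat \<Rightarrow> real) \<times> real \<Rightarrow> gpt" where
  "gq p = (if snd p = 0 then Gbot else if snd p = 1 then Gtop else Gin (fst p) (snd p))"

definition glob_carrier :: "(nat \<Rightarrow> real) set \<Rightarrow> gpt set" where
  "glob_carrier Z = {Gbot, Gtop} \<union> gq ` (Z \<times> {0..1})"

text \<open>Quotient topology of {0,1} + Z x [0,1].\<close>
definition glob_top :: "(nat \<Rightarrow> real) set \<Rightarrow> gpt topology" where
  "glob_top Z = topology (\<lambda>U. U \<subseteq> glob_carrier Z \<and>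
     openin (subtopology (prod_topology euclidean euclidean) (Z \<times> {0..1}))
            {p \<in> Z \<times> {0..1}. gq p \<in> U})"

definition glob_paths :: "(nat \<Rightarrow> real) set \<Rightarrow> (real \<Rightarrow> gpt) set" where
  "glob_paths Z = {(\<lambda>t. gq (z, \<phi> t)) | z \<phi>. z \<in> Z \<and> \<phi> \<in> G11}"

definition Glob :: "(nat \<Rightarrow> real) set \<Rightarrow> gpt mdspace" where
  "Glob Z = \<lparr>space = glob_top Z, states = {Gbot, Gtop}, paths = glob_paths Z\<rparr>"

text \<open>B is (up to isomorphism, with X_mu -> X_nu an inclusion) the pushout of
  Glob(S^{n-1}) \<subseteq> Glob(D^n) along the attaching map f restricted to Glob(S^{n-1}).\<close>
definition cell_attach :: "'a mdspace \<Rightarrow> 'a mdspace \<Rightarrow> bool" where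
  "cell_attach A B \<longleftrightarrow> (\<exists>n f. md_morphism (Glob (sphere_m1 n)) A f \<and>
     topspace (space A) \<subseteq> topspace (space B) \<and>
     inj_on f (glob_carrier (disk n) - glob_carrier (sphere_m1 n)) \<and>
     f ` (glob_carrier (disk n) - glob_carrier (sphere_m1 n)) = topspace (space B) - topspace (space A) \<and>
     (\<forall>U. openin (space B) U \<longleftrightarrow> U \<subseteq> topspace (space B) \<and>
            openin (space A) (U \<inter> topspace (space A)) \<and>
            openin (glob_top (disk n)) {x \<in> glob_carrier (disk n). f x \<in> U}) \<and>
     states B = states A \<union> f ` {Gbot, Gtop} \<and>
     paths B = gen_paths (paths A \<union> (\<lambda>g. f \<circ> g) ` glob_paths (disk n)))"

text \<open>Y is the colimit of the chain (of inclusions) X_nu, nu \<in> I.\<close>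
definition colim_of :: "'i set \<Rightarrow> ('i \<Rightarrow> 'a mdspace) \<Rightarrow> 'a mdspace \<Rightarrow> bool" where
  "colim_of I X Y \<longleftrightarrow>
     topspace (space Y) = (\<Union>\<nu>\<in>I. topspace (space (X \<nu>))) \<and>
     (\<forall>U. openin (space Y) U \<longleftrightarrow> U \<subseteq> topspace (space Y) \<and>
            (\<forall>\<nu>\<in>I. openin (space (X \<nu>)) (U \<inter> topspace (space (X \<nu>))))) \<and>
     states Y = (\<Union>\<nu>\<in>I. states (X \<nu>)) \<and>
     paths Y = gen_paths (\<Union>\<nu>\<in>I. paths (X \<nu>))"

text \<open>Y = X_lambda is cellular, presented by the tower X_nu (nu < lambda) indexed by
  an initial segment of a well-ordered type.\<close>
definition cellular :: "'i::wellorder \<Rightarrow> ('i \<Rightarrow> 'a mdspace) \<Rightarrow> 'a mdspace \<Rightarrow> bool" where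
  "cellular lam X Y \<longleftrightarrow>
     (\<forall>\<nu><lam. (\<forall>\<mu>. \<not> \<mu> < \<nu>) \<longrightarrow>
         space (X \<nu>) = discrete_topology (states (X \<nu>)) \<and> paths (X \<nu>) = {}) \<and>
     (\<forall>\<nu><lam. \<forall>\<mu><\<nu>. (\<forall>\<kappa>. \<not> (\<mu> < \<kappa> \<and> \<kappa> < \<nu>)) \<longrightarrow> cell_attach (X \<mu>) (X \<nu>)) \<and>
     (\<forall>\<nu><lam. (\<exists>\<mu>. \<mu> < \<nu>) \<and> (\<forall>\<mu><\<nu>. \<exists>\<kappa>. \<mu> < \<kappa> \<and> \<kappa> < \<nu>) \<longrightarrow>
         colim_of {\<mu>. \<mu> < \<nu>} X (X \<nu>)) \<and>
     colim_of {\<nu>. \<nu> < lam} X Y"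

end

theory Submission
  imports Defs
begin

text \<open>Call an execution path \<open>g\<close> tame (relative to the set of states \<open>S\<close>) if it starts and ends
  in \<open>S\<close>, is in \<open>S\<close> only finitely often, and never returns to a point without passing through
  \<open>S\<close> in between. The paths of a globular cell are tame because the attaching map is injective
  on the open cell, and tameness survives reparametrization, normalized composition and
  colimits; so every execution path of a cellular space is tame.

  A tame path \<open>g\<close> admits no nontrivial monotone self-reparametrization: if \<open>g \<circ> \<psi> = g\<close> then
  \<open>\<psi>\<close> maps the finitely many times at which \<open>g\<close> is in \<open>S\<close> strictly monotonically to themselves,
  hence fixes them; and if \<open>\<psi> t \<noteq> t\<close> for another time \<open>t\<close>, then \<open>g t = g (\<psi> t)\<close> forces a
  fixed time strictly between \<open>t\<close> and \<open>\<psi> t\<close>, contradicting monotonicity. Applied to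
  \<open>\<phi>\<^sub>1 \<circ> \<phi>\<^sub>2\<close> and \<open>\<phi>\<^sub>2 \<circ> \<phi>\<^sub>1\<close>, this makes \<open>\<phi>\<^sub>1, \<phi>\<^sub>2\<close> mutually inverse monotone bijections of
  \<open>[0,1]\<close>, which are automatically homeomorphisms.\<close>

lemma continuous_on_mono_onto_interval:
  fixes \<phi> :: "real \<Rightarrow> real"
  assumes mono: "mono_on {a..b} \<phi>" and onto: "\<phi> ` {a..b} = {c..d}"
  shows "continuous_on {a..b} \<phi>"
proof (cases "a \<le> b")
  case False
  then show ?thesis by simp
next
  case True
  have \<phi>_in: "\<phi> x \<in> {c..d}" if "x \<in> {a..b}" for x using onto that by blast
  from \<phi>_in[of a] True have "c \<le> d" by simp
  define e where "e x = (if x < a then c + (x - a) else if b < x then d + (x - b) else \<phi> x)" for x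
  have "e x \<le> e y" if "x \<le> y" for x y
    using that \<phi>_in[of x] \<phi>_in[of y] mono_onD[OF mono, of x y] \<open>c \<le> d\<close> by (auto simp: e_def)
  moreover have "range e = UNIV"
  proof -
    have "y \<in> range e" for y
    proof -
      consider "y < c" | "d < y" | "y \<in> {c..d}" by force
      then show ?thesis
      proof cases
        case 1
        then show ?thesis
          using True \<open>c \<le> d\<close> by (intro image_eqI[of _ _ "y - c + a"]) (auto simp: e_def)
      next
        case 2
        then show ?thesis
          using True \<open>c \<le> d\<close> by (intro image_eqI[of _ _ "y - d + b"]) (auto simp: e_def)
      next
        case 3
        then obtain x where "x \<in> {a..b}" "y = \<phi> x" using onto by blast
        then show ?thesis by (intro image_eqI[of _ _ x]) (auto simp: e_def)
      qed
    qed
    then show ?thesis by blast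
  qed
  ultimately have "continuous_on UNIV e" by (intro continuous_onI_mono) auto
  then have "continuous_on {a..b} e" by (rule continuous_on_subset) simp
  then show ?thesis by (rule continuous_on_eq) (auto simp: e_def)
qed

lemma G11I:
  fixes \<phi> \<psi> :: "real \<Rightarrow> real"
  assumes "mono_on {0..1} \<phi>" "mono_on {0..1} \<psi>"
    and "\<phi> ` {0..1} \<subseteq> {0..1}" "\<psi> ` {0..1} \<subseteq> {0..1}"
    and "\<forall>t\<in>{0..1}. \<psi> (\<phi> t) = t \<and> \<phi> (\<psi> t) = t"
  shows "\<phi> \<in> G11"
proof -
  have "{0..1} \<subseteq> \<phi> ` {0..1}" "{0..1} \<subseteq> \<psi> ` {0..1}"
    using assms(3-5) by (metis image_eqI image_subset_iff subsetI)+
  with assms(3,4) have onto: "\<phi> ` {0..1} = {0..1}" "\<psi> ` {0..1} = {0..1}" by auto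
  have "homeomorphism {0..1} {0..1} \<phi> \<psi>"
  proof
    show "continuous_on {0..1} \<phi>" by (rule continuous_on_mono_onto_interval) fact+
    show "continuous_on {0..1} \<psi>" by (rule continuous_on_mono_onto_interval) fact+
  qed (use assms(3-5) in auto)
  with assms(1) show ?thesis unfolding G11_def by blast
qed

lemma G11_image: "\<phi> \<in> G11 \<Longrightarrow> \<phi> ` {0..1} = {0..1}"
  unfolding G11_def homeomorphism_def by blast

lemma G11_strict_mono_on:
  assumes "\<phi> \<in> G11"
  shows "strict_mono_on {0..1} \<phi>"
proof -
  from assms obtain \<psi> where mono: "mono_on {0..1} \<phi>" and hom: "homeomorphism {0..1} {0..1} \<phi> \<psi>"
    unfolding G11_def by blast
  have "inj_on \<phi> {0..1}" by (rule inj_on_inverseI[of _ \<psi>]) (rule homeomorphism_apply1[OF hom])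
  with mono show ?thesis by (rule mono_imp_strict_mono)
qed

lemma G11_endpoints:
  assumes "\<phi> \<in> G11"
  shows "\<phi> 0 = 0" "\<phi> 1 = 1"
proof -
  have onto: "\<phi> ` {0..1} = {0..1}" by (rule G11_image[OF assms])
  have mono: "mono_on {0..1} \<phi>" using assms unfolding G11_def by blast
  have "0 \<in> \<phi> ` {0..1}" "1 \<in> \<phi> ` {0..1}" using onto by auto
  then obtain x y where xy: "x \<in> {0..1}" "\<phi> x = 0" "y \<in> {0..1}" "\<phi> y = 1"
    by (metis imageE)
  have "\<phi> 0 \<le> \<phi> x" "\<phi> y \<le> \<phi> 1" using mono_onD[OF mono] xy(1,3) by auto
  moreover have "\<phi> 0 \<in> {0..1}" "\<phi> 1 \<in> {0..1}" using onto by auto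
  ultimately show "\<phi> 0 = 0" "\<phi> 1 = 1" using xy by auto
qed

definition state_times :: "'a set \<Rightarrow> (real \<Rightarrow> 'a) \<Rightarrow> real set" where
  "state_times S g = {t\<in>{0..1}. g t \<in> S}"

definition tame_path :: "'a set \<Rightarrow> (real \<Rightarrow> 'a) \<Rightarrow> bool" where
  "tame_path S g \<longleftrightarrow> g 0 \<in> S \<and> g 1 \<in> S \<and> finite (state_times S g) \<and>
     (\<forall>s t. 0 \<le> s \<longrightarrow> s < t \<longrightarrow> t \<le> 1 \<longrightarrow> g s = g t \<longrightarrow> (\<exists>u\<in>{s..t}. g u \<in> S))"

lemma tame_pathI:
  assumes "g 0 \<in> S" "g 1 \<in> S" "finite (state_times S g)"
    and "\<And>s t. 0 \<le> s \<Longrightarrow> s < t \<Longrightarrow> t \<le> 1 \<Longrightarrow> g s = g t \<Longrightarrow> \<exists>u\<in>{s..t}. g u \<in> S"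
  shows "tame_path S g"
  using assms unfolding tame_path_def by blast

lemma tame_pathD:
  assumes "tame_path S g"
  shows "g 0 \<in> S" "g 1 \<in> S" "finite (state_times S g)"
    and "\<And>s t. 0 \<le> s \<Longrightarrow> s < t \<Longrightarrow> t \<le> 1 \<Longrightarrow> g s = g t \<Longrightarrow> \<exists>u\<in>{s..t}. g u \<in> S"
  using assms unfolding tame_path_def by blast+

lemma tame_path_cong:
  assumes "tame_path S g" and "\<forall>t\<in>{0..1}. h t = g t"
  shows "tame_path S h"
proof (rule tame_pathI)
  have "state_times S h = state_times S g" using assms(2) by (auto simp: state_times_def)
  then show "finite (state_times S h)" using tame_pathD(3)[OF assms(1)] by simp
  fix s t :: real assume st: "0 \<le> s" "s < t" "t \<le> 1" "h s = h t"
  then obtain u where "u \<in> {s..t}" "g u \<in> S"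
    using tame_pathD(4)[OF assms(1), of s t] assms(2) by auto
  with st assms(2) show "\<exists>u\<in>{s..t}. h u \<in> S" by (intro bexI[of _ u]) auto
next
  show "h 0 \<in> S" "h 1 \<in> S" using assms tame_pathD(1,2)[OF assms(1)] by auto
qed

lemma tame_path_reparam:
  assumes tame: "tame_path S g" and "\<phi> \<in> G11"
  shows "tame_path S (g \<circ> \<phi>)"
proof (rule tame_pathI)
  have onto: "\<phi> ` {0..1} = {0..1}" by (rule G11_image) fact
  have smono: "strict_mono_on {0..1} \<phi>" by (rule G11_strict_mono_on) fact
  have "state_times S (g \<circ> \<phi>) = \<phi> -` state_times S g \<inter> {0..1}"
    using onto by (auto simp: state_times_def)
  then show "finite (state_times S (g \<circ> \<phi>))"
    using finite_vimage_IntI[OF tame_pathD(3)[OF tame] strict_mono_on_imp_inj_on[OF smono]] by simp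
  fix s t :: real assume st: "0 \<le> s" "s < t" "t \<le> 1" "(g \<circ> \<phi>) s = (g \<circ> \<phi>) t"
  have "\<phi> s < \<phi> t" using strict_mono_onD[OF smono] st by auto
  moreover have "\<phi> s \<in> {0..1}" "\<phi> t \<in> {0..1}" using onto st by auto
  ultimately obtain u where u: "u \<in> {\<phi> s..\<phi> t}" "g u \<in> S"
    using tame_pathD(4)[OF tame, of "\<phi> s" "\<phi> t"] st by auto
  then obtain v where v: "v \<in> {0..1}" "u = \<phi> v" using onto \<open>\<phi> s \<in> {0..1}\<close> \<open>\<phi> t \<in> {0..1}\<close>
    by (metis atLeastAtMost_iff imageE order_trans)
  then have "v \<in> {s..t}" using u st strict_mono_on_less_eq[OF smono] by auto
  with u v show "\<exists>v\<in>{s..t}. (g \<circ> \<phi>) v \<in> S" by auto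
next
  show "(g \<circ> \<phi>) 0 \<in> S" "(g \<circ> \<phi>) 1 \<in> S"
    using tame_pathD(1,2)[OF tame] G11_endpoints[OF assms(2)] by auto
qed

lemma tame_path_normcomp:
  assumes tame1: "tame_path S g1" and tame2: "tame_path S g2" and "g1 1 = g2 0"
  shows "tame_path S (normcomp g1 g2)"
proof (rule tame_pathI)
  let ?h = "normcomp g1 g2"
  have left: "?h t = g1 (2 * t)" if "t \<le> 1/2" for t using that by (simp add: normcomp_def)
  have right: "?h t = g2 (2 * t - 1)" if "\<not> t \<le> 1/2" for t using that by (simp add: normcomp_def)
  have "state_times S ?h \<subseteq> (\<lambda>x. x / 2) ` state_times S g1 \<union> (\<lambda>x. (x + 1) / 2) ` state_times S g2"
  proof
    fix t assume t: "t \<in> state_times S ?h"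
    show "t \<in> (\<lambda>x. x / 2) ` state_times S g1 \<union> (\<lambda>x. (x + 1) / 2) ` state_times S g2"
    proof (cases "t \<le> 1/2")
      case True
      then have "2 * t \<in> state_times S g1" using t left by (auto simp: state_times_def)
      then show ?thesis by (intro UnI1 image_eqI[of _ _ "2 * t"]) auto
    next
      case False
      then have "2 * t - 1 \<in> state_times S g2" using t right by (auto simp: state_times_def)
      then show ?thesis by (intro UnI2 image_eqI[of _ _ "2 * t - 1"]) auto
    qed
  qed
  then show "finite (state_times S ?h)"
    using tame_pathD(3)[OF tame1] tame_pathD(3)[OF tame2]
    by (rule finite_subset[OF _ finite_UnI[OF finite_imageI finite_imageI]])
  show "?h 0 \<in> S" "?h 1 \<in> S"
    using left[of 0] right[of 1] tame_pathD(1)[OF tame1] tame_pathD(2)[OF tame2] by auto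
  fix s t :: real assume st: "0 \<le> s" "s < t" "t \<le> 1" "?h s = ?h t"
  consider "t \<le> 1/2" | "s \<le> 1/2" "\<not> t \<le> 1/2" | "\<not> s \<le> 1/2" by linarith
  then show "\<exists>u\<in>{s..t}. ?h u \<in> S"
  proof cases
    case 1
    then have "g1 (2 * s) = g1 (2 * t)" using st left by simp
    then obtain u where "u \<in> {2 * s..2 * t}" "g1 u \<in> S"
      using tame_pathD(4)[OF tame1, of "2 * s" "2 * t"] st 1 by auto
    then show ?thesis using left[of "u / 2"] 1 by (intro bexI[of _ "u / 2"]) auto
  next
    case 2
    then show ?thesis using left[of "1/2"] tame_pathD(2)[OF tame1] by (intro bexI[of _ "1/2"]) auto
  next
    case 3
    then have "g2 (2 * s - 1) = g2 (2 * t - 1)" using st right by simp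
    then obtain u where u: "u \<in> {2 * s - 1..2 * t - 1}" "g2 u \<in> S"
      using tame_pathD(4)[OF tame2, of "2 * s - 1" "2 * t - 1"] st 3 by auto
    with 3 have "?h ((u + 1) / 2) = g2 u" using right[of "(u + 1) / 2"] by (simp add: field_simps)
    with u show ?thesis by (intro bexI[of _ "(u + 1) / 2"]) auto
  qed
qed

lemma gen_paths_tame:
  assumes "g \<in> gen_paths P" and "\<forall>p\<in>P. tame_path S p"
  shows "tame_path S g"
  using assms(1)
proof induction
  case (base g)
  then show ?case using assms(2) by blast
next
  case (reparam g \<phi>)
  then show ?case by (blast intro: tame_path_reparam)
next
  case (concat g1 g2)
  then show ?case by (blast intro: tame_path_normcomp)
next
  case (ext g h)
  then show ?case by (blast intro: tame_path_cong)
qed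

lemma strict_mono_on_finite_self_map_eq_id:
  fixes \<psi> :: "'a::linorder \<Rightarrow> 'a"
  assumes fin: "finite T" and into: "\<psi> ` T \<subseteq> T" and smono: "strict_mono_on T \<psi>" and "t \<in> T"
  shows "\<psi> t = t"
proof (rule ccontr)
  assume "\<psi> t \<noteq> t"
  have inj: "inj_on \<psi> A" if "A \<subseteq> T" for A
    using strict_mono_on_imp_inj_on[OF smono] that by (rule inj_on_subset)
  have \<psi>t: "\<psi> t \<in> T" using into \<open>t \<in> T\<close> by blast
  note less_iff = strict_mono_on_less[OF smono]
  consider "\<psi> t < t" | "t < \<psi> t" using \<open>\<psi> t \<noteq> t\<close> neqE by blast
  then show False
  proof cases
    case 1
    let ?A = "{s\<in>T. s < t}" and ?B = "{s\<in>T. s < \<psi> t}"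
    have "\<psi> ` ?A \<subseteq> ?B" using into less_iff \<open>t \<in> T\<close> by auto
    then have "card ?A \<le> card ?B" using fin inj[of ?A] by (intro card_inj_on_le) auto
    moreover have "?B \<subset> ?A" using 1 \<psi>t by auto
    then have "card ?B < card ?A" using fin by (intro psubset_card_mono) auto
    ultimately show False by simp
  next
    case 2
    let ?A = "{s\<in>T. t < s}" and ?B = "{s\<in>T. \<psi> t < s}"
    have "\<psi> ` ?A \<subseteq> ?B" using into less_iff \<open>t \<in> T\<close> by auto
    then have "card ?A \<le> card ?B" using fin inj[of ?A] by (intro card_inj_on_le) auto
    moreover have "?B \<subset> ?A" using 2 \<psi>t by auto
    then have "card ?B < card ?A" using fin by (intro psubset_card_mono) auto
    ultimately show False by simp
  qed
qed

lemma self_reparam_state_times_iff: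
  assumes "\<psi> ` {0..1} \<subseteq> {0..1}" and "\<forall>t\<in>{0..1}. g (\<psi> t) = g t" and "t \<in> {0..1}"
  shows "\<psi> t \<in> state_times S g \<longleftrightarrow> t \<in> state_times S g"
  using assms by (auto simp: state_times_def image_subset_iff)

lemma tame_path_self_reparam_strict_mono_on_state_times:
  assumes tame: "tame_path S g" and into: "\<psi> ` {0..1} \<subseteq> {0..1}" and mono: "mono_on {0..1} \<psi>"
    and inv: "\<forall>t\<in>{0..1}. g (\<psi> t) = g t"
  shows "strict_mono_on (state_times S g) \<psi>"
proof (rule strict_mono_onI)
  note \<psi>_state = self_reparam_state_times_iff[OF into inv]
  fix a b assume ab: "a \<in> state_times S g" "b \<in> state_times S g" "a < b"
  then have ab01: "a \<in> {0..1}" "b \<in> {0..1}" by (auto simp: state_times_def)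
  show "\<psi> a < \<psi> b"
  proof (rule ccontr)
    assume "\<not> \<psi> a < \<psi> b"
    with mono_onD[OF mono ab01] ab(3) have eq: "\<psi> a = \<psi> b" by simp
    have "\<not> {a<..<b} \<subseteq> state_times S g"
      using tame_pathD(3)[OF tame] finite_subset ab(3) infinite_Ioo by blast
    then obtain c where c: "c \<in> {a<..<b}" "c \<notin> state_times S g" by blast
    with ab01 have c01: "c \<in> {0..1}" by auto
    have "\<psi> a \<le> \<psi> c" "\<psi> c \<le> \<psi> b" using mono_onD[OF mono] c ab01 c01 by auto
    with eq have "\<psi> c = \<psi> a" by simp
    then show False using \<psi>_state[OF c01] \<psi>_state[OF ab01(1)] ab(1) c(2) by simp
  qed
qed

lemma tame_path_self_reparam_eq_id:
  assumes tame: "tame_path S g" and into: "\<psi> ` {0..1} \<subseteq> {0..1}" and mono: "mono_on {0..1} \<psi>"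
    and inv: "\<forall>t\<in>{0..1}. g (\<psi> t) = g t"
  shows "\<forall>t\<in>{0..1}. \<psi> t = t"
proof
  note \<psi>_state = self_reparam_state_times_iff[OF into inv]
  have fixed: "\<psi> u = u" if "u \<in> state_times S g" for u
  proof (rule strict_mono_on_finite_self_map_eq_id)
    show "\<psi> ` state_times S g \<subseteq> state_times S g" using \<psi>_state by (auto simp: state_times_def)
  qed (use tame_pathD(3)[OF tame] tame_path_self_reparam_strict_mono_on_state_times[OF assms] that
      in auto)
  fix t :: real assume t: "t \<in> {0..1}"
  show "\<psi> t = t"
  proof (rule ccontr)
    assume "\<psi> t \<noteq> t"
    then have "t \<notin> state_times S g" using fixed by blast
    with \<psi>_state[OF t] have \<psi>t: "\<psi> t \<notin> state_times S g" by blast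
    define a b where "a = min t (\<psi> t)" and "b = max t (\<psi> t)"
    have "\<psi> t \<in> {0..1}" using into t by blast
    with t \<open>\<psi> t \<noteq> t\<close> have ab: "0 \<le> a" "a < b" "b \<le> 1" "g a = g b"
      using inv by (auto simp: a_def b_def min_def max_def)
    then obtain u where u: "u \<in> {a..b}" "g u \<in> S" using tame_pathD(4)[OF tame] by blast
    then have uT: "u \<in> state_times S g" using ab by (auto simp: state_times_def)
    with \<open>t \<notin> state_times S g\<close> \<psi>t u(1) have "a < u" "u < b"
      by (auto simp: a_def b_def min_def max_def order_le_less split: if_splits)
    have u01: "u \<in> {0..1}" using uT by (simp add: state_times_def)
    have "\<psi> t \<le> u" if "t \<le> u" using mono_onD[OF mono t u01 that] fixed[OF uT] by simp
    moreover have "u \<le> \<psi> t" if "u \<le> t" using mono_onD[OF mono u01 t that] fixed[OF uT] by simp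
    ultimately show False
      using \<open>a < u\<close> \<open>u < b\<close> by (auto simp: a_def b_def min_def max_def split: if_splits)
  qed
qed

lemma tame_path_reparam_comp_eq_id:
  assumes "tame_path S g1"
    and "\<phi>1 ` {0..1} \<subseteq> {0..1}" "mono_on {0..1} \<phi>1" "\<phi>2 ` {0..1} \<subseteq> {0..1}" "mono_on {0..1} \<phi>2"
    and "\<forall>t\<in>{0..1}. g1 (\<phi>1 t) = g2 t" "\<forall>t\<in>{0..1}. g1 t = g2 (\<phi>2 t)"
  shows "\<forall>t\<in>{0..1}. \<phi>1 (\<phi>2 t) = t"
proof -
  have "\<forall>t\<in>{0..1}. (\<phi>1 \<circ> \<phi>2) t = t"
  proof (rule tame_path_self_reparam_eq_id[OF assms(1)])
    show "(\<phi>1 \<circ> \<phi>2) ` {0..1} \<subseteq> {0..1}" using assms(2,4) by (auto simp: image_subset_iff)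
    show "mono_on {0..1} (\<phi>1 \<circ> \<phi>2)" using assms(3,5,4) by (rule monotone_on_o)
    show "\<forall>t\<in>{0..1}. g1 ((\<phi>1 \<circ> \<phi>2) t) = g1 t" using assms(4,6,7) by (auto simp: image_subset_iff)
  qed
  then show ?thesis by simp
qed

lemma tame_path_if_inj_on_interior:
  assumes "h 0 \<in> S" "h 1 \<in> S" and inj: "inj_on h {0<..<1}" and avoids: "h ` {0<..<1} \<inter> S = {}"
  shows "tame_path S h"
proof (rule tame_pathI)
  have "state_times S h \<subseteq> {0, 1}"
  proof
    fix t assume "t \<in> state_times S h"
    then have "t \<in> {0..1}" "h t \<in> S" by (auto simp: state_times_def)
    moreover have "t \<notin> {0<..<1}" using avoids \<open>h t \<in> S\<close> by blast
    ultimately show "t \<in> {0, 1}" by auto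
  qed
  then show "finite (state_times S h)" by (rule finite_subset) simp
  fix s t :: real assume st: "0 \<le> s" "s < t" "t \<le> 1" "h s = h t"
  show "\<exists>u\<in>{s..t}. h u \<in> S"
  proof (cases "s = 0 \<or> t = 1")
    case True
    then show ?thesis using assms(1,2) st(2) by auto
  next
    case False
    with st have "s \<in> {0<..<1}" "t \<in> {0<..<1}" by auto
    with inj st have "s = t" by (blast dest: inj_onD)
    with st(2) show ?thesis by simp
  qed
qed (use assms in auto)

definition open_cell :: "nat \<Rightarrow> gpt set" where
  "open_cell n = glob_carrier (disk n) - glob_carrier (sphere_m1 n)"

lemma Gin_in_open_cell:
  assumes "z \<in> disk n - sphere_m1 n" and "r \<in> {0<..<1}"
  shows "Gin z r \<in> open_cell n"
proof -
  have "Gin z r = gq (z, r)" using assms(2) by (simp add: gq_def)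
  then have "Gin z r \<in> glob_carrier (disk n)" using assms unfolding glob_carrier_def by force
  moreover have "Gin z r \<notin> glob_carrier (sphere_m1 n)"
    using assms by (auto simp: glob_carrier_def gq_def split: if_splits)
  ultimately show ?thesis unfolding open_cell_def by blast
qed

lemma cell_path_tame:
  assumes inj: "inj_on f (open_cell n)" and avoids: "f ` open_cell n \<inter> S = {}"
    and "f Gbot \<in> S" "f Gtop \<in> S" and z: "z \<in> disk n - sphere_m1 n" and "\<phi> \<in> G11"
  shows "tame_path S (f \<circ> (\<lambda>t. gq (z, \<phi> t)))"
proof (rule tame_path_if_inj_on_interior)
  have smono: "strict_mono_on {0..1} \<phi>" by (rule G11_strict_mono_on) fact
  have ends: "\<phi> 0 = 0" "\<phi> 1 = 1" by (rule G11_endpoints, fact)+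
  have interior: "\<phi> t \<in> {0<..<1}" if "t \<in> {0<..<1}" for t
    using strict_mono_onD[OF smono, of 0 t] strict_mono_onD[OF smono, of t 1] ends that by auto
  have path_eq: "(f \<circ> (\<lambda>t. gq (z, \<phi> t))) t = f (Gin z (\<phi> t))" if "t \<in> {0<..<1}" for t
    using interior[OF that] by (simp add: gq_def)
  have in_cell: "Gin z (\<phi> t) \<in> open_cell n" if "t \<in> {0<..<1}" for t
    using Gin_in_open_cell[OF z interior[OF that]] .
  show "inj_on (f \<circ> (\<lambda>t. gq (z, \<phi> t))) {0<..<1}"
  proof (rule inj_onI)
    fix s t assume s: "s \<in> {0<..<1}" and t: "t \<in> {0<..<1}"
      and "(f \<circ> (\<lambda>t. gq (z, \<phi> t))) s = (f \<circ> (\<lambda>t. gq (z, \<phi> t))) t"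
    then have "f (Gin z (\<phi> s)) = f (Gin z (\<phi> t))" by (simp only: path_eq)
    then have "\<phi> s = \<phi> t" using inj_onD[OF inj _ in_cell[OF s] in_cell[OF t]] by simp
    then show "s = t" using strict_mono_on_eqD[OF smono] s t by auto
  qed
  have "(f \<circ> (\<lambda>t. gq (z, \<phi> t))) t \<notin> S" if "t \<in> {0<..<1}" for t
    using path_eq[OF that] in_cell[OF that] avoids by blast
  then show "(f \<circ> (\<lambda>t. gq (z, \<phi> t))) ` {0<..<1} \<inter> S = {}" by blast
  show "(f \<circ> (\<lambda>t. gq (z, \<phi> t))) 0 \<in> S" "(f \<circ> (\<lambda>t. gq (z, \<phi> t))) 1 \<in> S"
    using assms(3,4) ends by (simp_all add: gq_def)
qed

definition tame_mdspace :: "'a set \<Rightarrow> 'a mdspace \<Rightarrow> bool" where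
  "tame_mdspace S A \<longleftrightarrow> states A = S \<and> S \<subseteq> topspace (space A) \<and> (\<forall>g\<in>paths A. tame_path S g)"

lemma tame_mdspace_cell_attach:
  assumes tame: "tame_mdspace S A" and "cell_attach A B"
  shows "tame_mdspace S B"
proof -
  obtain n f where md: "md_morphism (Glob (sphere_m1 n)) A f"
    and top: "topspace (space A) \<subseteq> topspace (space B)"
    and inj: "inj_on f (open_cell n)"
    and new: "f ` open_cell n = topspace (space B) - topspace (space A)"
    and st: "states B = states A \<union> f ` {Gbot, Gtop}"
    and pa: "paths B = gen_paths (paths A \<union> (\<lambda>g. f \<circ> g) ` glob_paths (disk n))"
    using assms(2) unfolding cell_attach_def open_cell_def[symmetric]
    by (elim exE conjE) (rule that)
  have SA: "states A = S" "S \<subseteq> topspace (space A)" and pathsA: "\<forall>g\<in>paths A. tame_path S g"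
    using tame unfolding tame_mdspace_def by auto
  have ends: "f Gbot \<in> S" "f Gtop \<in> S" using md SA(1) unfolding md_morphism_def Glob_def by auto
  have avoids: "f ` open_cell n \<inter> S = {}" using new SA(2) by blast
  have "tame_path S p" if p: "p \<in> paths A \<union> (\<lambda>g. f \<circ> g) ` glob_paths (disk n)" for p
  proof -
    consider "p \<in> paths A" | z \<phi> where "z \<in> disk n" "\<phi> \<in> G11" "p = f \<circ> (\<lambda>t. gq (z, \<phi> t))"
      using p by (auto simp: glob_paths_def)
    then show ?thesis
    proof cases
      case 1
      then show ?thesis using pathsA by blast
    next
      case (2 z \<phi>)
      show ?thesis
      proof (cases "z \<in> sphere_m1 n")
        case True
        then have "(\<lambda>t. gq (z, \<phi> t)) \<in> paths (Glob (sphere_m1 n))"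
          using 2 unfolding Glob_def glob_paths_def by auto
        then have "p \<in> paths A" using md 2(3) unfolding md_morphism_def by auto
        then show ?thesis using pathsA by blast
      next
        case False
        then show ?thesis using cell_path_tame[OF inj avoids ends] 2 by blast
      qed
    qed
  qed
  then have "\<forall>g\<in>paths B. tame_path S g" unfolding pa using gen_paths_tame by blast
  moreover have "states B = S" using st SA(1) ends by auto
  moreover have "S \<subseteq> topspace (space B)" using SA(2) top by blast
  ultimately show ?thesis unfolding tame_mdspace_def by blast
qed

lemma tame_mdspace_colim:
  assumes "I \<noteq> {}" and tame: "\<forall>\<mu>\<in>I. tame_mdspace S (X \<mu>)" and colim: "colim_of I X Y"
  shows "tame_mdspace S Y"
proof -
  have top: "topspace (space Y) = (\<Union>\<nu>\<in>I. topspace (space (X \<nu>)))"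
    using colim unfolding colim_of_def by (elim conjE)
  have st: "states Y = (\<Union>\<nu>\<in>I. states (X \<nu>))"
    using colim unfolding colim_of_def by (elim conjE)
  have pa: "paths Y = gen_paths (\<Union>\<nu>\<in>I. paths (X \<nu>))"
    using colim unfolding colim_of_def by (elim conjE)
  obtain \<mu> where "\<mu> \<in> I" using assms(1) by blast
  have "states Y = S" using assms(1) tame unfolding st tame_mdspace_def by auto
  moreover have "S \<subseteq> topspace (space Y)"
    using tame \<open>\<mu> \<in> I\<close> unfolding top tame_mdspace_def by blast
  moreover have "\<forall>g\<in>paths Y. tame_path S g"
    using tame unfolding pa tame_mdspace_def by (blast intro: gen_paths_tame)
  ultimately show ?thesis unfolding tame_mdspace_def by blast
qed

lemma cellularD:
  assumes "cellular lam X Y"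
  shows "\<And>\<nu>. \<nu> < lam \<Longrightarrow> \<forall>\<mu>. \<not> \<mu> < \<nu> \<Longrightarrow>
      space (X \<nu>) = discrete_topology (states (X \<nu>)) \<and> paths (X \<nu>) = {}"
    and "\<And>\<nu> \<mu>. \<nu> < lam \<Longrightarrow> \<mu> < \<nu> \<Longrightarrow> \<forall>\<kappa>. \<not> (\<mu> < \<kappa> \<and> \<kappa> < \<nu>) \<Longrightarrow> cell_attach (X \<mu>) (X \<nu>)"
    and "\<And>\<nu>. \<nu> < lam \<Longrightarrow> \<exists>\<mu>. \<mu> < \<nu> \<Longrightarrow> \<forall>\<mu><\<nu>. \<exists>\<kappa>. \<mu> < \<kappa> \<and> \<kappa> < \<nu> \<Longrightarrow>
      colim_of {\<mu>. \<mu> < \<nu>} X (X \<nu>)"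
    and "colim_of {\<nu>. \<nu> < lam} X Y"
  using assms unfolding cellular_def by blast+

lemma cellular_tower_tame:
  fixes lam :: "'i::wellorder"
  assumes cell: "cellular lam X Y" and "\<nu> < lam"
  shows "tame_mdspace (states (X (LEAST \<mu>. True))) (X \<nu>)"
  using assms(2)
proof (induction \<nu> rule: less_induct)
  case (less \<nu>)
  let ?S = "states (X (LEAST \<mu>. True))"
  have IH: "tame_mdspace ?S (X \<mu>)" if "\<mu> < \<nu>" for \<mu>
    using less.IH that less.prems by (meson less_trans)
  consider (initial) "\<forall>\<mu>. \<not> \<mu> < \<nu>" | (successor) \<mu> where "\<mu> < \<nu>" "\<forall>\<kappa>. \<not> (\<mu> < \<kappa> \<and> \<kappa> < \<nu>)"
    | (limit) "\<exists>\<mu>. \<mu> < \<nu>" "\<forall>\<mu><\<nu>. \<exists>\<kappa>. \<mu> < \<kappa> \<and> \<kappa> < \<nu>"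
    by blast
  then show ?case
  proof cases
    case initial
    then have "\<nu> = (LEAST \<mu>. True)" by (metis Least_le order_le_less)
    moreover have "space (X \<nu>) = discrete_topology (states (X \<nu>))" "paths (X \<nu>) = {}"
      using cellularD(1)[OF cell less.prems initial] by auto
    ultimately show ?thesis unfolding tame_mdspace_def by simp
  next
    case successor
    with IH show ?thesis by (blast intro: tame_mdspace_cell_attach cellularD(2)[OF cell less.prems])
  next
    case limit
    then show ?thesis
      using IH cellularD(3)[OF cell less.prems limit] by (intro tame_mdspace_colim) auto
  qed
qed

lemma gen_paths_empty: "gen_paths {} = {}"
proof -
  have "g \<notin> gen_paths {}" for g :: "real \<Rightarrow> 'a"
  proof
    assume "g \<in> gen_paths {}"
    then show False by induction auto
  qed
  then show ?thesis by blast
qed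

lemma cellular_paths_tame:
  assumes cell: "cellular lam X Y" and "g \<in> paths Y"
  shows "tame_path (states Y) g"
proof -
  have colim: "colim_of {\<nu>. \<nu> < lam} X Y" by (rule cellularD(4)[OF cell])
  have nonempty: "{\<nu>. \<nu> < lam} \<noteq> {}"
  proof
    assume empty: "{\<nu>. \<nu> < lam} = {}"
    have "paths Y = gen_paths (\<Union>\<nu>\<in>{\<nu>. \<nu> < lam}. paths (X \<nu>))"
      using colim unfolding colim_of_def by (elim conjE)
    also have "\<dots> = {}" unfolding empty by (simp add: gen_paths_empty)
    finally show False using assms(2) by simp
  qed
  have "\<forall>\<nu>\<in>{\<nu>. \<nu> < lam}. tame_mdspace (states (X (LEAST \<mu>. True))) (X \<nu>)"
    using cellular_tower_tame[OF cell] by simp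
  then have "tame_mdspace (states (X (LEAST \<mu>. True))) Y"
    by (rule tame_mdspace_colim[OF nonempty _ colim])
  then have "states Y = states (X (LEAST \<mu>. True))"
    and "\<forall>h\<in>paths Y. tame_path (states (X (LEAST \<mu>. True))) h"
    unfolding tame_mdspace_def by blast+
  with assms(2) show ?thesis by simp
qed

theorem theorem6p6:
  fixes lam :: "'i::wellorder" and X :: "'i \<Rightarrow> 'a mdspace" and Y :: "'a mdspace"
    and g1 g2 :: "real \<Rightarrow> 'a" and \<phi>1 \<phi>2 :: "real \<Rightarrow> real"
  assumes "cellular lam X Y"
    and "g1 \<in> paths Y" and "g2 \<in> paths Y"
    and "\<phi>1 ` {0..1} \<subseteq> {0..1}" and "mono_on {0..1} \<phi>1" and "\<phi>1 0 = 0" and "\<phi>1 1 = 1"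
    and "\<phi>2 ` {0..1} \<subseteq> {0..1}" and "mono_on {0..1} \<phi>2" and "\<phi>2 0 = 0" and "\<phi>2 1 = 1"
    and "\<forall>t\<in>{0..1}. g1 (\<phi>1 t) = g2 t"
    and "\<forall>t\<in>{0..1}. g1 t = g2 (\<phi>2 t)"
  shows "\<phi>1 \<in> G11 \<and> \<phi>2 \<in> G11 \<and> (\<forall>t\<in>{0..1}. \<phi>2 (\<phi>1 t) = t \<and> \<phi>1 (\<phi>2 t) = t)"
proof -
  have tame: "tame_path (states Y) g1" "tame_path (states Y) g2"
    using cellular_paths_tame assms(1-3) by blast+
  have "\<forall>t\<in>{0..1}. \<phi>1 (\<phi>2 t) = t"
    by (rule tame_path_reparam_comp_eq_id[OF tame(1) assms(4,5,8,9,12,13)])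
  moreover have "\<forall>t\<in>{0..1}. \<phi>2 (\<phi>1 t) = t"
    by (rule tame_path_reparam_comp_eq_id[OF tame(2) assms(8,9,4,5)])
      (use assms(4,12,13) in \<open>auto simp: image_subset_iff\<close>)
  ultimately show ?thesis using G11I[OF assms(5,9,4,8)] G11I[OF assms(9,5,8,4)] by auto
qed

end
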